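(* Let $\mathfrak a=\mathbb H^p$ and $V=\mathrm{Span}(J_1,J_2)$ with $J_1=\mathrm{diag}(L_{a_1},\dots,L_{a_p})$, $J_2=\mathrm{diag}(L_{b_1},\dots,L_{b_p})$, where $a_s,b_s\in\mathrm{Im}\,\mathbb H$ are linearly independent for each $s$. Then for every inner product on $V$, $(V,\langle\cdot,\cdot\rangle)$ is a WS-pair. More precisely, there is $P=\mathrm{diag}(L_{q_1},\dots,L_{q_p})$ with unit $q_s\in \mathrm{Im}\,\mathbb H$ such that $PJP^{-1}=-J$ for all $J\in V$, and for every $X\in\mathfrak a$ there is $Q=\mathrm{diag}(R_{r_1},\dots,R_{r_p})$ with unit $r_s\in\mathbb H$ such that $N=QP$ satisfies $NX=-X$ and $NJ=-JN$ for all $J\in V$.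
   Context: $\mathbb H$ denotes the quaternions with standard inner product, $L_q,R_q$ left and right multiplication by $q$, and $\mathrm{diag}$ denotes block-diagonal operators on $\mathbb H^p$ acting coordinatewise. For a Euclidean space $\mathfrak a$, a subspace $V\subset\mathfrak{so}(\mathfrak a)$ with inner product $\langle\cdot,\cdot\rangle$ defines the metric 2-step nilpotent Lie algebra $\mathfrak n=V\oplus\mathfrak a$ (orthogonal sum, $V$ central, $\langle J,[X,Y]\rangle=\langle JX,Y\rangle$). It is a WS-pair if the corresponding simply connected nilpotent Lie group with left-invariant metric is weakly symmetric. Standing fact: this holds iff for every $J\in V$, $X\in\mathfrak a$ there is $N\in\mathcal N(V)=\{N\in O(\mathfrak a): NVN^{-1}\subset V$, $K\mapsto NKN^{-1}$ orthogonal on $(V,\langle\cdot,\cdot\rangle)\}$ with $NX=-X$, $NJ=-JN$. *)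

theory Defs
  imports "HOL-Analysis.Analysis"
begin

text \<open>Quaternions modelled as real^4 with components (real, i, j, k) = indices 1,2,3,4;
  the Euclidean inner product on real^4 is the standard quaternion inner product.\<close>

type_synonym quat = "real^4"

definition qmul :: "quat \<Rightarrow> quat \<Rightarrow> quat" where
  "qmul x y = vector
     [ x$1*y$1 - x$2*y$2 - x$3*y$3 - x$4*y$4,
       x$1*y$2 + x$2*y$1 + x$3*y$4 - x$4*y$3,
       x$1*y$3 - x$2*y$4 + x$3*y$1 + x$4*y$2,
       x$1*y$4 + x$2*y$3 - x$3*y$2 + x$4*y$1 ]"

definition pure_quat :: "quat \<Rightarrow> bool" where
  "pure_quat x \<longleftrightarrow> x$1 = 0"

definition diagL :: "quat^'p \<Rightarrow> quat^'p \<Rightarrow> quat^'p" where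
  "diagL a X = (\<chi> s. qmul (a$s) (X$s))"

definition diagR :: "quat^'p \<Rightarrow> quat^'p \<Rightarrow> quat^'p" where
  "diagR a X = (\<chi> s. qmul (X$s) (a$s))"

definition span2 :: "('v::real_vector \<Rightarrow> 'v) \<Rightarrow> ('v \<Rightarrow> 'v) \<Rightarrow> ('v \<Rightarrow> 'v) set" where
  "span2 J1 J2 = {(\<lambda>x. c1 *\<^sub>R J1 x + c2 *\<^sub>R J2 x) | c1 c2. True}"

definition inner_prod_on :: "('v::real_vector \<Rightarrow> 'v) set \<Rightarrow> (('v \<Rightarrow> 'v) \<Rightarrow> ('v \<Rightarrow> 'v) \<Rightarrow> real) \<Rightarrow> bool" where
  "inner_prod_on V ip \<longleftrightarrow>
     (\<forall>J\<in>V. \<forall>K\<in>V. ip J K = ip K J) \<and>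
     (\<forall>J\<in>V. \<forall>K\<in>V. \<forall>L\<in>V. \<forall>c. ip (\<lambda>x. c *\<^sub>R J x + K x) L = c * ip J L + ip K L) \<and>
     (\<forall>J\<in>V. J \<noteq> (\<lambda>x. 0) \<longrightarrow> ip J J > 0)"

definition normaliser :: "('v::real_inner \<Rightarrow> 'v) set \<Rightarrow> (('v \<Rightarrow> 'v) \<Rightarrow> ('v \<Rightarrow> 'v) \<Rightarrow> real) \<Rightarrow> ('v \<Rightarrow> 'v) set" where
  "normaliser V ip = {N. orthogonal_transformation N \<and>
       (\<forall>J\<in>V. N \<circ> J \<circ> inv N \<in> V) \<and>
       (\<forall>J\<in>V. \<forall>K\<in>V. ip (N \<circ> J \<circ> inv N) (N \<circ> K \<circ> inv N) = ip J K)}"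

text \<open>WS-pair, via the standing characterisation of weak symmetry.\<close>

definition WS_pair :: "('v::real_inner \<Rightarrow> 'v) set \<Rightarrow> (('v \<Rightarrow> 'v) \<Rightarrow> ('v \<Rightarrow> 'v) \<Rightarrow> real) \<Rightarrow> bool" where
  "WS_pair V ip \<longleftrightarrow>
     (\<forall>J\<in>V. \<forall>X. \<exists>N\<in>normaliser V ip. N X = - X \<and> (\<forall>x. N (J x) = - J (N x)))"

end

theory Submission
  imports Defs
begin

text \<open>In each quaternion block, V acts by left multiplication with pure quaternions from the
  plane spanned by a_s and b_s. A unit pure quaternion q_s orthogonal to that plane anticommutes
  with all of them, so P = diag(L_q_s) is orthogonal and anticommutes with V, while right
  multiplications commute with V. Given X, the unit r_s = X_s^-1 q_s X_s (or 1 if X_s = 0) gives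
  q_s X_s r_s = q_s^2 X_s = -X_s. Finally, an orthogonal map anticommuting with V conjugates each
  J to -J, which preserves V and every inner product on it.\<close>

lemma vector_4_nth [simp]:
  "(vector [x, y, z, w] :: ('a::zero)^4) $ 1 = x"
  "(vector [x, y, z, w] :: ('a::zero)^4) $ 2 = y"
  "(vector [x, y, z, w] :: ('a::zero)^4) $ 3 = z"
  "(vector [x, y, z, w] :: ('a::zero)^4) $ 4 = w"
  unfolding vector_def by simp_all

lemma qmul_nth [simp]:
  "qmul x y $ 1 = x$1*y$1 - x$2*y$2 - x$3*y$3 - x$4*y$4"
  "qmul x y $ 2 = x$1*y$2 + x$2*y$1 + x$3*y$4 - x$4*y$3"
  "qmul x y $ 3 = x$1*y$3 - x$2*y$4 + x$3*y$1 + x$4*y$2"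
  "qmul x y $ 4 = x$1*y$4 + x$2*y$3 - x$3*y$2 + x$4*y$1"
  by (simp_all add: qmul_def)

lemma quat_eq_iff: "(x::quat) = y \<longleftrightarrow> x$1 = y$1 \<and> x$2 = y$2 \<and> x$3 = y$3 \<and> x$4 = y$4"
  unfolding vec_eq_iff forall_4 by (rule refl)

lemma norm_quat: "norm (x::quat) = sqrt (x$1^2 + x$2^2 + x$3^2 + x$4^2)"
  by (simp add: norm_vec_def L2_set_def sum_4)

lemma inner_quat: "(x::quat) \<bullet> y = x$1*y$1 + x$2*y$2 + x$3*y$3 + x$4*y$4"
  by (simp add: inner_vec_def sum_4)

lemma qmul_assoc: "qmul (qmul x y) z = qmul x (qmul y z)"
  by (simp add: quat_eq_iff algebra_simps)

lemma norm_qmul: "norm (qmul x y) = norm x * norm y"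
proof -
  have "(qmul x y$1)^2 + (qmul x y$2)^2 + (qmul x y$3)^2 + (qmul x y$4)^2
      = (x$1^2 + x$2^2 + x$3^2 + x$4^2) * (y$1^2 + y$2^2 + y$3^2 + y$4^2)"
    by (simp add: power2_eq_square algebra_simps)
  then show ?thesis
    by (simp add: norm_quat real_sqrt_mult)
qed

lemma qmul_add_left: "qmul (x + y) z = qmul x z + qmul y z"
  and qmul_add_right: "qmul z (x + y) = qmul z x + qmul z y"
  and qmul_scaleR_left: "qmul (c *\<^sub>R x) z = c *\<^sub>R qmul x z"
  and qmul_scaleR_right: "qmul z (c *\<^sub>R x) = c *\<^sub>R qmul z x"
  and qmul_minus_left: "qmul (- x) z = - qmul x z"
  by (simp_all add: quat_eq_iff algebra_simps)

definition qone :: quat where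
  "qone = vector [1, 0, 0, 0]"

definition conjq :: "quat \<Rightarrow> quat" where
  "conjq x = vector [x$1, - x$2, - x$3, - x$4]"

lemma qmul_qone_left [simp]: "qmul qone x = x"
  and norm_qone [simp]: "norm qone = 1"
  by (simp_all add: quat_eq_iff norm_quat qone_def)

lemma norm_conjq [simp]: "norm (conjq x) = norm x"
  by (simp add: norm_quat conjq_def)

lemma qmul_conjq_right: "qmul x (conjq x) = (norm x ^ 2) *\<^sub>R qone"
  by (simp add: quat_eq_iff norm_quat conjq_def qone_def algebra_simps power2_eq_square)

lemma pure_quat_iff_orthogonal_qone: "pure_quat x \<longleftrightarrow> x \<bullet> qone = 0"
  by (simp add: pure_quat_def inner_quat qone_def)

lemma pure_quat_linear_combination:
  "pure_quat x \<Longrightarrow> pure_quat y \<Longrightarrow> pure_quat (c *\<^sub>R x + d *\<^sub>R y)"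
  by (simp add: pure_quat_def)

lemma qmul_pure_orthogonal_anticommute:
  assumes "pure_quat q" "pure_quat e" "q \<bullet> e = 0"
  shows "qmul q e = - qmul e q"
  using assms by (simp add: pure_quat_def inner_quat quat_eq_iff algebra_simps)

lemma qmul_pure_unit_self:
  assumes "pure_quat q" "norm q = 1"
  shows "qmul q q = - qone"
proof -
  have "q$2^2 + q$3^2 + q$4^2 = 1"
    using assms by (simp add: pure_quat_def norm_quat)
  then show ?thesis
    using assms(1) by (simp add: pure_quat_def quat_eq_iff qone_def power2_eq_square)
qed

lemma pure_unit_orthogonal_exists:
  obtains q where "pure_quat q" "norm q = 1" "q \<bullet> a = 0" "q \<bullet> b = 0"
proof -
  have "dim {qone, a, b} \<le> card {qone, a, b}"
    by (rule dim_le_card') simp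
  also have "\<dots> < DIM(quat)"
    by (simp add: card_insert_if)
  finally obtain x where x: "x \<noteq> 0" "\<And>y. y \<in> span {qone, a, b} \<Longrightarrow> orthogonal x y"
    by (metis orthogonal_to_subspace_exists)
  have "x \<bullet> qone = 0" "x \<bullet> a = 0" "x \<bullet> b = 0"
    using x(2) by (simp_all add: orthogonal_def span_base)
  with x(1) show thesis
    by (intro that[of "(1 / norm x) *\<^sub>R x"]) (simp_all add: pure_quat_iff_orthogonal_qone)
qed

lemma unit_right_factor_negates:
  assumes "pure_quat q" "norm q = 1"
  obtains r where "norm r = 1" "qmul (qmul q x) r = - x"
proof (cases "x = 0")
  case True
  then show thesis
    by (intro that[of qone]) (simp_all add: quat_eq_iff)
next
  case False
  let ?r = "(1 / norm x ^ 2) *\<^sub>R qmul (conjq x) (qmul q x)"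
  have "qmul (qmul q x) ?r
      = (1 / norm x ^ 2) *\<^sub>R qmul q (qmul (qmul x (conjq x)) (qmul q x))"
    by (simp add: qmul_scaleR_right qmul_assoc)
  also have "\<dots> = qmul (qmul q q) x"
    using False by (simp add: qmul_conjq_right qmul_scaleR_left qmul_scaleR_right qmul_assoc)
  also have "\<dots> = - x"
    using assms by (simp add: qmul_pure_unit_self quat_eq_iff qone_def)
  finally show thesis
    using False by (intro that[of ?r]) (simp_all add: norm_qmul power2_eq_square assms(2))
qed

lemma diagR_minus: "diagR r (- x) = - diagR r x"
  by (simp add: diagR_def vec_eq_iff qmul_minus_left)

lemma diagR_diagL_commute: "diagR r (diagL c x) = diagL c (diagR r x)"
  by (simp add: diagR_def diagL_def qmul_assoc)

lemma diagL_anticommute: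
  assumes "\<And>s. pure_quat (q$s) \<and> pure_quat (c$s) \<and> q$s \<bullet> c$s = 0"
  shows "diagL q (diagL c x) = - diagL c (diagL q x)"
proof -
  have "qmul (q$s) (c$s) = - qmul (c$s) (q$s)" for s
    using assms by (simp add: qmul_pure_orthogonal_anticommute)
  then show ?thesis
    unfolding diagL_def by (intro vec_eq_iff[THEN iffD2]) (simp add: qmul_minus_left flip: qmul_assoc)
qed

lemma orthogonal_transformation_diagL:
  assumes "\<And>s. norm (q$s) = 1"
  shows "orthogonal_transformation (diagL q)"
  unfolding orthogonal_transformation
proof (intro conjI allI)
  show "linear (diagL q)"
    by (simp add: linear_iff diagL_def vec_eq_iff qmul_add_right qmul_scaleR_right)
  fix x
  have "(\<lambda>s. norm (diagL q x $ s)) = (\<lambda>s. norm (x$s))"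
    by (simp add: diagL_def norm_qmul assms)
  then show "norm (diagL q x) = norm x"
    by (metis norm_vec_def)
qed

lemma orthogonal_transformation_diagR:
  assumes "\<And>s. norm (r$s) = 1"
  shows "orthogonal_transformation (diagR r)"
  unfolding orthogonal_transformation
proof (intro conjI allI)
  show "linear (diagR r)"
    by (simp add: linear_iff diagR_def vec_eq_iff qmul_add_left qmul_scaleR_left)
  fix x
  have "(\<lambda>s. norm (diagR r x $ s)) = (\<lambda>s. norm (x$s))"
    by (simp add: diagR_def norm_qmul assms)
  then show "norm (diagR r x) = norm x"
    by (metis norm_vec_def)
qed

lemma orthogonal_transformation_diagR_diagL:
  assumes "\<forall>s. norm (r$s) = 1" "\<forall>s. norm (q$s) = 1"
  shows "orthogonal_transformation (\<lambda>x. diagR r (diagL q x))"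
proof -
  have "orthogonal_transformation (diagR r \<circ> diagL q)"
    using assms by (intro orthogonal_transformation_compose orthogonal_transformation_diagR
        orthogonal_transformation_diagL) auto
  then show ?thesis
    by (simp add: comp_def)
qed

lemma diagR_diagL_negates:
  assumes "\<forall>s. pure_quat (q$s) \<and> norm (q$s) = 1"
  shows "\<exists>r. (\<forall>s. norm (r$s) = 1) \<and> diagR r (diagL q X) = - X"
proof -
  have "\<forall>s. \<exists>r. norm r = 1 \<and> qmul (qmul (q$s) (X$s)) r = - X$s"
    using assms unit_right_factor_negates by blast
  then obtain r where "\<forall>s. norm (r$s) = 1 \<and> qmul (qmul (q$s) (X$s)) (r$s) = - X$s"
    unfolding lambda_skolem by blast
  then show ?thesis
    by (auto simp: diagR_def diagL_def vec_eq_iff)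
qed

lemma span2_diagL_cases:
  assumes "J \<in> span2 (diagL a) (diagL b)"
  obtains c1 c2 where "J = diagL (c1 *\<^sub>R a + c2 *\<^sub>R b)"
  using assms unfolding span2_def
  by (auto simp: diagL_def fun_eq_iff vec_eq_iff qmul_add_left qmul_scaleR_left)

lemma diagL_anticommute_span2:
  assumes "\<And>s. pure_quat (q$s) \<and> pure_quat (a$s) \<and> pure_quat (b$s) \<and> q$s \<bullet> a$s = 0 \<and> q$s \<bullet> b$s = 0"
    and "J \<in> span2 (diagL a) (diagL b)"
  shows "diagL q (J x) = - J (diagL q x)"
proof -
  obtain c1 c2 where J: "J = diagL (c1 *\<^sub>R a + c2 *\<^sub>R b)"
    using assms(2) by (rule span2_diagL_cases)
  show ?thesis
    unfolding J by (rule diagL_anticommute) (simp add: assms pure_quat_linear_combination inner_add_right)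
qed

lemma diagL_anticommuting_unit_exists:
  assumes "\<forall>s. pure_quat (a$s) \<and> pure_quat (b$s)"
  obtains q :: "quat^'n" where "\<forall>s. pure_quat (q$s) \<and> norm (q$s) = 1"
    "\<And>J x. J \<in> span2 (diagL a) (diagL b) \<Longrightarrow> diagL q (J x) = - J (diagL q x)"
proof -
  have "\<forall>s. \<exists>q. pure_quat q \<and> norm q = 1 \<and> q \<bullet> a$s = 0 \<and> q \<bullet> b$s = 0"
    using pure_unit_orthogonal_exists by blast
  then obtain q :: "quat^'n"
    where q: "\<forall>s. pure_quat (q$s) \<and> norm (q$s) = 1 \<and> q$s \<bullet> a$s = 0 \<and> q$s \<bullet> b$s = 0"
    unfolding lambda_skolem by blast
  show thesis
  proof (rule that)
    show "\<forall>s. pure_quat (q$s) \<and> norm (q$s) = 1"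
      using q by blast
    show "diagL q (J x) = - J (diagL q x)" if "J \<in> span2 (diagL a) (diagL b)" for J x
      using diagL_anticommute_span2 q assms that by blast
  qed
qed

lemma diagR_commute_span2:
  assumes "J \<in> span2 (diagL a) (diagL b)"
  shows "diagR r (J x) = J (diagR r x)"
proof -
  obtain c1 c2 where "J = diagL (c1 *\<^sub>R a + c2 *\<^sub>R b)"
    using assms by (rule span2_diagL_cases)
  then show ?thesis
    by (simp add: diagR_diagL_commute)
qed

lemma span2_uminus: "J \<in> span2 A B \<Longrightarrow> (\<lambda>x. - J x) \<in> span2 A B"
  unfolding span2_def by (force intro: exI[of _ "- c" for c])

lemma span2_zero: "(\<lambda>x. 0) \<in> span2 A B"
  unfolding span2_def by (force intro: exI[of _ 0])

lemma inner_prod_on_span2_uminus: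
  assumes ip: "inner_prod_on (span2 A B) ip" and J: "J \<in> span2 A B" and K: "K \<in> span2 A B"
  shows "ip (\<lambda>x. - J x) (\<lambda>x. - K x) = ip J K"
proof -
  have lin: "\<And>J K L c. J \<in> span2 A B \<Longrightarrow> K \<in> span2 A B \<Longrightarrow> L \<in> span2 A B \<Longrightarrow>
      ip (\<lambda>x. c *\<^sub>R J x + K x) L = c * ip J L + ip K L"
    and sym: "\<And>J K. J \<in> span2 A B \<Longrightarrow> K \<in> span2 A B \<Longrightarrow> ip J K = ip K J"
    using ip unfolding inner_prod_on_def by blast+
  have zero: "ip (\<lambda>x. 0) L = 0" if "L \<in> span2 A B" for L
    using lin[OF span2_zero span2_zero that, of 1] by simp
  have neg: "ip (\<lambda>x. - J x) L = - ip J L" if "J \<in> span2 A B" "L \<in> span2 A B" for J L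
    using lin[OF that(1) span2_zero that(2), of "-1"] zero[OF that(2)] by simp
  have "ip (\<lambda>x. - J x) (\<lambda>x. - K x) = - ip (\<lambda>x. - K x) J"
    using neg sym J K span2_uminus by metis
  also have "\<dots> = ip J K"
    using neg sym J K by simp
  finally show ?thesis .
qed

lemma conj_eq_uminus_if_anticommute:
  fixes N :: "'v::euclidean_space \<Rightarrow> 'v"
  assumes "orthogonal_transformation N" "\<And>x. N (J x) = - J (N x)"
  shows "N \<circ> J \<circ> inv N = (\<lambda>x. - J x)"
proof
  fix x
  have "surj N"
    using assms(1) orthogonal_transformation_surj by blast
  then show "(N \<circ> J \<circ> inv N) x = - J x"
    using assms(2) by (simp add: surj_f_inv_f)
qed

lemma anticommuting_in_normaliser:
  fixes N :: "'v::euclidean_space \<Rightarrow> 'v"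
  assumes ip: "inner_prod_on (span2 A B) ip" and N: "orthogonal_transformation N"
    and anti: "\<And>J x. J \<in> span2 A B \<Longrightarrow> N (J x) = - J (N x)"
  shows "N \<in> normaliser (span2 A B) ip"
proof -
  have conj: "N \<circ> J \<circ> inv N = (\<lambda>x. - J x)" if "J \<in> span2 A B" for J
    by (rule conj_eq_uminus_if_anticommute[OF N]) (rule anti[OF that])
  show ?thesis
    unfolding normaliser_def
    using N conj inner_prod_on_span2_uminus[OF ip] by (simp add: span2_uminus)
qed

lemma WS_pair_if_anticommuting_negations:
  fixes A B :: "'v::euclidean_space \<Rightarrow> 'v"
  assumes ip: "inner_prod_on (span2 A B) ip"
    and negations: "\<And>X. \<exists>N. orthogonal_transformation N \<and> N X = - X \<and>
        (\<forall>J\<in>span2 A B. \<forall>x. N (J x) = - J (N x))"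
  shows "WS_pair (span2 A B) ip"
  unfolding WS_pair_def
proof (intro ballI allI)
  fix J X
  assume J: "J \<in> span2 A B"
  obtain N where N: "orthogonal_transformation N" "N X = - X"
    "\<forall>J\<in>span2 A B. \<forall>x. N (J x) = - J (N x)"
    using negations by blast
  have "N \<in> normaliser (span2 A B) ip"
    using N(1,3) by (intro anticommuting_in_normaliser[OF ip]) auto
  then show "\<exists>N\<in>normaliser (span2 A B) ip. N X = - X \<and> (\<forall>x. N (J x) = - J (N x))"
    using N(2,3) J by blast
qed

theorem mainTheorem3:
  fixes a b :: "quat^'p"
  assumes pure: "\<forall>s. pure_quat (a$s) \<and> pure_quat (b$s)"
    and indep: "\<forall>s. \<forall>c1 c2 :: real. c1 *\<^sub>R a$s + c2 *\<^sub>R b$s = 0 \<longrightarrow> c1 = 0 \<and> c2 = 0"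
  shows "(\<forall>ip. inner_prod_on (span2 (diagL a) (diagL b)) ip
            \<longrightarrow> WS_pair (span2 (diagL a) (diagL b)) ip)
       \<and> (\<exists>q :: quat^'p. (\<forall>s. pure_quat (q$s) \<and> norm (q$s) = 1) \<and>
            (\<forall>J\<in>span2 (diagL a) (diagL b). diagL q \<circ> J \<circ> inv (diagL q) = (\<lambda>x. - J x)) \<and>
            (\<forall>X :: quat^'p. \<exists>r :: quat^'p. (\<forall>s. norm (r$s) = 1) \<and>
               diagR r (diagL q X) = - X \<and>
               (\<forall>J\<in>span2 (diagL a) (diagL b). \<forall>x. diagR r (diagL q (J x)) = - J (diagR r (diagL q x)))))"
proof -
  let ?V = "span2 (diagL a) (diagL b)"
  obtain q :: "quat^'p" where q: "\<forall>s. pure_quat (q$s) \<and> norm (q$s) = 1"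
    and P_anti: "\<And>J x. J \<in> ?V \<Longrightarrow> diagL q (J x) = - J (diagL q x)"
    using pure by (rule diagL_anticommuting_unit_exists) blast
  have N_anti: "diagR r (diagL q (J x)) = - J (diagR r (diagL q x))" if "J \<in> ?V" for r J x
    using P_anti[OF that] diagR_commute_span2[OF that] by (simp add: diagR_minus)
  have N_negates: "\<exists>r. (\<forall>s. norm (r$s) = 1) \<and> diagR r (diagL q X) = - X" for X
    using q by (intro diagR_diagL_negates) blast
  have "WS_pair ?V ip" if "inner_prod_on ?V ip" for ip
    using that
  proof (rule WS_pair_if_anticommuting_negations)
    fix X
    obtain r where r: "\<forall>s. norm (r$s) = 1" "diagR r (diagL q X) = - X"
      using N_negates by blast
    then show "\<exists>N. orthogonal_transformation N \<and> N X = - X \<and> (\<forall>J\<in>?V. \<forall>x. N (J x) = - J (N x))"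
      using orthogonal_transformation_diagR_diagL[OF r(1)] q N_anti by blast
  qed
  moreover have "diagL q \<circ> J \<circ> inv (diagL q) = (\<lambda>x. - J x)" if "J \<in> ?V" for J
    using q P_anti[OF that]
    by (intro conj_eq_uminus_if_anticommute orthogonal_transformation_diagL) auto
  moreover have "\<forall>X. \<exists>r. (\<forall>s. norm (r$s) = 1) \<and> diagR r (diagL q X) = - X \<and>
      (\<forall>J\<in>?V. \<forall>x. diagR r (diagL q (J x)) = - J (diagR r (diagL q x)))"
    using N_negates N_anti by blast
  ultimately show ?thesis
    using q by (intro conjI exI[of _ q]) blast+
qed

end
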